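(* Let $\mathring B_1,\dots,\mathring B_k$ be open Euclidean balls in $\mathbb R^d$, let $B_j$ denote the closed ball with the same center and radius as $\mathring B_j$ ($j\in[k]$), and let $B_c$ be a closed Euclidean ball in $\mathbb R^d$. Let $P$ be a set of representative points of intersections with respect to the family $\{B_c,B_1,\dots,B_k\}$. For any subfamily $\{\mathring B_{i_1},\dots,\mathring B_{i_r}\}\subseteq\{\mathring B_1,\dots,\mathring B_k\}$, let $P'=\{x\in\mathbb R^d: x\in B_c \text{ and } x\notin\mathring B_j \text{ for all } j\in\{i_1,\dots,i_r\}\}$. If $P'\neq\emptyset$, then $P\cap P'\neq\emptyset$.
   Context: For a family of closed Euclidean balls in $\mathbb R^d$, denote by $S_j$ the boundary sphere of ball $j$. A set $P\subseteq\mathbb R^d$ is a set of representative points of intersections for the family if for every subfamily $F$ with $|F|\le d$: (i) if $\bigcap_{j\in F}S_j$ is connected, then $P$ contains a point of $\bigcap_{j\in F}S_j$; and (ii) if $\bigcap_{j\in F}S_j$ contains at most two points, then $P$ contains $\bigcap_{j\in F}S_j$. *)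

theory Defs
  imports "HOL-Analysis.Analysis"
begin

text \<open>A family of closed balls in the Euclidean space 'a (dimension DIM('a)) is given
  by an index set J, centers c and radii r; ball j is cball (c j) (r j), its boundary
  sphere is sphere (c j) (r j).\<close>

definition rep_points :: "'a::euclidean_space set \<Rightarrow> 'i set \<Rightarrow> ('i \<Rightarrow> 'a) \<Rightarrow> ('i \<Rightarrow> real) \<Rightarrow> bool" where
  "rep_points P J c r \<longleftrightarrow>
     (\<forall>F. F \<subseteq> J \<and> F \<noteq> {} \<and> finite F \<and> card F \<le> DIM('a) \<longrightarrow>
        ((\<Inter>j\<in>F. sphere (c j) (r j)) \<noteq> {} \<and> connected (\<Inter>j\<in>F. sphere (c j) (r j))
            \<longrightarrow> P \<inter> (\<Inter>j\<in>F. sphere (c j) (r j)) \<noteq> {})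
      \<and> (finite (\<Inter>j\<in>F. sphere (c j) (r j)) \<and> card (\<Inter>j\<in>F. sphere (c j) (r j)) \<le> 2
            \<longrightarrow> (\<Inter>j\<in>F. sphere (c j) (r j)) \<subseteq> P))"

end

(* Let P' be the region and choose a maximal set F of indices whose boundary spheres have a
   common point y in P'.  By maximality, on the intersection T of these spheres P' coincides
   with an open set, so T \<inter> P' is relatively open and closed in T.  Through y, T is a sphere
   cut by an affine subspace, and already d of the spheres cut out either T itself, when T is
   connected, or a set of at most two points containing y.  In the first case T \<subseteq> P' and P
   meets T; in the second, y \<in> P. *)

theory Submission
  imports Defs
begin

abbreviation sphere_Inter :: "('i \<Rightarrow> 'a::metric_space) \<Rightarrow> ('i \<Rightarrow> real) \<Rightarrow> 'i set \<Rightarrow> 'a set" where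
  "sphere_Inter C R F \<equiv> \<Inter>j\<in>F. sphere (C j) (R j)"

lemma finite_card_le_2I:
  assumes "\<And>x y z. x \<in> S \<Longrightarrow> y \<in> S \<Longrightarrow> z \<in> S \<Longrightarrow> x \<noteq> y \<Longrightarrow> y \<noteq> z \<Longrightarrow> x \<noteq> z \<Longrightarrow> False"
  shows "finite S \<and> card S \<le> 2"
proof (rule ccontr)
  assume "\<not> (finite S \<and> card S \<le> 2)"
  then obtain T where "T \<subseteq> S" "card T = 3"
    by (metis infinite_arbitrarily_large not_less_eq_eq numeral_2_eq_2 numeral_3_eq_3
        obtain_subset_with_card_n)
  then obtain x y z where "{x, y, z} \<subseteq> S" "x \<noteq> y" "y \<noteq> z" "x \<noteq> z"
    by (auto simp: card_3_iff)
  then show False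
    using assms[of x y z] by simp
qed

lemma sphere_Int_collinear_card_le_2:
  fixes A :: "'a::euclidean_space set"
  assumes "collinear A"
  shows "finite (sphere c r \<inter> A) \<and> card (sphere c r \<inter> A) \<le> 2"
proof (rule finite_card_le_2I)
  have not_between: False
    if "between (a, b) m" "m \<noteq> a" "m \<noteq> b" "a \<in> sphere c r" "b \<in> sphere c r" "m \<in> sphere c r"
    for a b m
  proof -
    have "m \<in> open_segment a b"
      using that by (simp add: between_mem_segment open_segment_def)
    then show False
      using dist_decreases_open_segment[of m a b c] that by auto
  qed
  fix x y z
  assume xyz: "x \<in> sphere c r \<inter> A" "y \<in> sphere c r \<inter> A" "z \<in> sphere c r \<inter> A"
    "x \<noteq> y" "y \<noteq> z" "x \<noteq> z"
  then have "collinear {x, y, z}"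
    using assms collinear_subset by (metis IntD2 empty_subsetI insert_subset)
  then show False
    unfolding collinear_between_cases using xyz not_between by blast
qed

lemma connected_sphere_Int_affine:
  fixes A :: "'a::euclidean_space set"
  assumes "affine A" "aff_dim A \<noteq> 1"
  shows "connected (sphere c r \<inter> A)"
proof -
  let ?S = "cball c r \<inter> A"
  have "convex ?S"
    using assms affine_imp_convex convex_Int by blast
  show ?thesis
  proof (cases "ball c r \<inter> A = {}")
    case True
    then have "sphere c r \<inter> A = ?S"
      by (fastforce simp: less_eq_real_def)
    then show ?thesis
      using \<open>convex ?S\<close> convex_connected by metis
  next
    case False
    have "rel_interior ?S = ball c r \<inter> A"
      using rel_interior_convex_Int_affine[of "cball c r" A] False assms by simp
    moreover have "closure ?S = ?S"
      using assms by (metis closed_Int closed_affine_hull closed_cball closure_closed hull_same)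
    ultimately have rel_frontier: "rel_frontier ?S = sphere c r \<inter> A"
      unfolding rel_frontier_def by auto
    have "aff_dim (A \<inter> ball c r) = aff_dim A"
      using False by (intro aff_dim_convex_Int_open affine_imp_convex assms(1)) (auto simp: Int_commute)
    moreover have "aff_dim (A \<inter> ball c r) \<le> aff_dim ?S"
      by (auto intro!: aff_dim_subset)
    moreover have "aff_dim ?S \<le> aff_dim A"
      by (auto intro!: aff_dim_subset)
    ultimately have "aff_dim ?S \<noteq> 1"
      using assms(2) by linarith
    moreover have "bounded ?S"
      by (simp add: bounded_Int)
    ultimately show ?thesis
      using connected_sphere_gen[OF \<open>convex ?S\<close>] rel_frontier by metis
  qed
qed

definition orthogonal_flat :: "'a::real_inner \<Rightarrow> 'a set \<Rightarrow> 'a set" where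
  "orthogonal_flat y V = {x. \<forall>v\<in>V. orthogonal v (x - y)}"

lemma orthogonal_flat_eq_translation:
  "orthogonal_flat y V = (+) y ` {z. \<forall>v\<in>V. orthogonal v z}"
  unfolding orthogonal_flat_def by (force simp: image_iff)

lemma affine_orthogonal_flat: "affine (orthogonal_flat y V)"
  unfolding orthogonal_flat_eq_translation
  by (intro affine_translation[THEN iffD1] subspace_imp_affine subspace_orthogonal_to_vectors)

lemma orthogonal_flat_span [simp]: "orthogonal_flat y (span V) = orthogonal_flat y V"
  unfolding orthogonal_flat_def
  by (auto intro: span_base orthogonal_to_span[THEN orthogonal_commute[THEN iffD1]]
      simp: orthogonal_commute)

lemma aff_dim_orthogonal_flat:
  fixes V :: "'a::euclidean_space set"
  shows "aff_dim (orthogonal_flat y V) = int DIM('a) - int (dim V)"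
proof -
  have "dim {z \<in> UNIV. \<forall>v\<in>span V. orthogonal v z} + dim (span V) = dim (UNIV :: 'a set)"
    by (rule dim_subspace_orthogonal_to_vectors) auto
  moreover have "aff_dim (orthogonal_flat y (span V)) = int (dim {z. \<forall>v\<in>span V. orthogonal v z})"
    unfolding orthogonal_flat_eq_translation aff_dim_translation_eq
    by (intro aff_dim_subspace subspace_orthogonal_to_vectors)
  ultimately show ?thesis
    by simp
qed

lemma in_sphere_iff_orthogonal:
  fixes a b x y :: "'a::real_inner"
  assumes "y \<in> sphere a ra" "y \<in> sphere b rb" "x \<in> sphere a ra"
  shows "x \<in> sphere b rb \<longleftrightarrow> orthogonal (b - a) (x - y)"
proof -
  have dist_b: "(dist b z)\<^sup>2 = (dist a z)\<^sup>2 - 2 * ((z - a) \<bullet> (b - a)) + (norm (b - a))\<^sup>2" for z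
    unfolding dist_norm power2_norm_eq_inner by (simp add: algebra_simps inner_commute)
  have "x \<in> sphere b rb \<longleftrightarrow> (dist b x)\<^sup>2 = (dist b y)\<^sup>2"
    using assms(2) by (auto simp: power2_eq_iff_nonneg)
  also have "\<dots> \<longleftrightarrow> (x - a) \<bullet> (b - a) = (y - a) \<bullet> (b - a)"
    using dist_b[of x] dist_b[of y] assms(1,3) by auto
  also have "\<dots> \<longleftrightarrow> orthogonal (b - a) (x - y)"
    by (simp add: orthogonal_def algebra_simps inner_commute)
  finally show ?thesis .
qed

lemma sphere_Inter_insert_eq_sphere_Int_orthogonal_flat:
  fixes C :: "'i \<Rightarrow> 'a::real_inner"
  assumes "y \<in> sphere_Inter C R F" "j0 \<in> F" "H \<subseteq> F"
  shows "sphere_Inter C R (insert j0 H) =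
           sphere (C j0) (R j0) \<inter> orthogonal_flat y ((\<lambda>j. C j - C j0) ` H)"
proof -
  have "x \<in> sphere (C j) (R j) \<longleftrightarrow> orthogonal (C j - C j0) (x - y)"
    if "j \<in> H" "x \<in> sphere (C j0) (R j0)" for j x
    using in_sphere_iff_orthogonal[of y "C j0" "R j0" "C j" "R j" x] assms that by auto
  then show ?thesis
    unfolding orthogonal_flat_def by auto
qed

lemma sphere_Int_orthogonal_flat_reduce:
  fixes V :: "'a::euclidean_space set"
  obtains B where "B \<subseteq> V" "card B < DIM('a)"
    "(orthogonal_flat y B = orthogonal_flat y V \<and> connected (sphere c r \<inter> orthogonal_flat y V))
     \<or> (finite (sphere c r \<inter> orthogonal_flat y B) \<and> card (sphere c r \<inter> orthogonal_flat y B) \<le> 2)"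
proof -
  obtain B0 where B0: "B0 \<subseteq> V" "independent B0" "V \<subseteq> span B0"
    by (rule maximal_independent_subset)
  have "span V = span B0"
    using B0(1,3) span_superset[of V] by (simp add: span_eq order_trans)
  then have flat_B0: "orthogonal_flat y B0 = orthogonal_flat y V"
    by (metis orthogonal_flat_span)
  have aff_dim_B: "aff_dim (orthogonal_flat y B) = int DIM('a) - int (card B)" if "B \<subseteq> B0" for B
    using aff_dim_orthogonal_flat[of y B] dim_eq_card_independent independent_mono[OF B0(2) that]
    by simp
  have finite_if_line: "finite (sphere c r \<inter> orthogonal_flat y B) \<and> card (sphere c r \<inter> orthogonal_flat y B) \<le> 2"
    if "aff_dim (orthogonal_flat y B) = 1" for B
    using that by (simp add: sphere_Int_collinear_card_le_2 collinear_aff_dim)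
  have "finite B0" "card B0 \<le> DIM('a)"
    using independent_bound[OF B0(2)] by auto
  show ?thesis
  proof (cases "card B0 < DIM('a)")
    case True
    show ?thesis
    proof (rule that[OF B0(1) True])
      show "(orthogonal_flat y B0 = orthogonal_flat y V \<and> connected (sphere c r \<inter> orthogonal_flat y V))
        \<or> (finite (sphere c r \<inter> orthogonal_flat y B0) \<and> card (sphere c r \<inter> orthogonal_flat y B0) \<le> 2)"
      proof (cases "aff_dim (orthogonal_flat y B0) = 1")
        case True
        then show ?thesis
          using finite_if_line by blast
      next
        case False
        then show ?thesis
          using flat_B0 connected_sphere_Int_affine[OF affine_orthogonal_flat False] by simp
      qed
    qed
  next
    case False
    \<comment> \<open>a full basis: dropping one vector leaves a line\<close>
    then have "card B0 = DIM('a)"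
      using \<open>card B0 \<le> DIM('a)\<close> by simp
    then obtain b where "b \<in> B0"
      using DIM_positive[where 'a='a] by (metis card.empty ex_in_conv less_irrefl)
    let ?B = "B0 - {b}"
    have "card ?B = DIM('a) - 1"
      using \<open>b \<in> B0\<close> \<open>finite B0\<close> \<open>card B0 = DIM('a)\<close> by simp
    then have "aff_dim (orthogonal_flat y ?B) = 1"
      using aff_dim_B[of ?B] DIM_positive[where 'a='a] by (simp add: of_nat_diff)
    then show ?thesis
      using that[of ?B] finite_if_line[of ?B] B0(1) \<open>card ?B = DIM('a) - 1\<close> DIM_positive[where 'a='a]
      by auto
  qed
qed

lemma sphere_Inter_reduce:
  fixes C :: "'i \<Rightarrow> 'a::euclidean_space"
  assumes "finite F" "j0 \<in> F" "y \<in> sphere_Inter C R F"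
  obtains F0 where "F0 \<subseteq> F" "F0 \<noteq> {}" "card F0 \<le> DIM('a)" "y \<in> sphere_Inter C R F0"
    "(sphere_Inter C R F0 = sphere_Inter C R F \<and> connected (sphere_Inter C R F))
     \<or> (finite (sphere_Inter C R F0) \<and> card (sphere_Inter C R F0) \<le> 2)"
proof -
  define v where "v j = C j - C j0" for j
  have spheres_eq: "sphere_Inter C R (insert j0 H) = sphere (C j0) (R j0) \<inter> orthogonal_flat y (v ` H)"
    if "H \<subseteq> F" for H
    unfolding v_def using sphere_Inter_insert_eq_sphere_Int_orthogonal_flat[OF assms(3,2) that] .
  obtain B where B: "B \<subseteq> v ` F" "card B < DIM('a)"
    and cases: "(orthogonal_flat y B = orthogonal_flat y (v ` F)
                 \<and> connected (sphere (C j0) (R j0) \<inter> orthogonal_flat y (v ` F)))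
      \<or> (finite (sphere (C j0) (R j0) \<inter> orthogonal_flat y B)
         \<and> card (sphere (C j0) (R j0) \<inter> orthogonal_flat y B) \<le> 2)"
    by (rule sphere_Int_orthogonal_flat_reduce)
  then obtain G where G: "G \<subseteq> F" "inj_on v G" "B = v ` G"
    by (meson subset_image_inj)
  have "card (insert j0 G) \<le> DIM('a)"
    using B(2) G(2,3) card_image card_insert_le_m1 by (metis DIM_positive Suc_pred' less_Suc_eq_le)
  moreover have "sphere_Inter C R F = sphere (C j0) (R j0) \<inter> orthogonal_flat y (v ` F)"
    using spheres_eq[of F] assms(2) by (simp add: insert_absorb)
  moreover have "y \<in> sphere_Inter C R (insert j0 G)"
    using assms(2,3) G(1) by blast
  ultimately show ?thesis
    using that[of "insert j0 G"] spheres_eq[OF G(1)] cases G(1,3) assms(2) by auto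
qed

lemma rep_points_Inter_spheres:
  fixes C :: "'i \<Rightarrow> 'a::euclidean_space"
  assumes "rep_points P J C R" "F \<subseteq> J" "finite F" "F \<noteq> {}" "y \<in> sphere_Inter C R F"
  shows "y \<in> P \<or> (connected (sphere_Inter C R F) \<and> P \<inter> sphere_Inter C R F \<noteq> {})"
proof -
  obtain j0 where "j0 \<in> F"
    using assms(4) by blast
  obtain F0 where F0: "F0 \<subseteq> F" "F0 \<noteq> {}" "card F0 \<le> DIM('a)" "y \<in> sphere_Inter C R F0"
    "(sphere_Inter C R F0 = sphere_Inter C R F \<and> connected (sphere_Inter C R F))
     \<or> (finite (sphere_Inter C R F0) \<and> card (sphere_Inter C R F0) \<le> 2)"
    using sphere_Inter_reduce[OF assms(3) \<open>j0 \<in> F\<close> assms(5)] by blast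
  have "F0 \<subseteq> J" "finite F0"
    using F0(1) assms(2,3) finite_subset by auto
  then have rep: "(sphere_Inter C R F0 \<noteq> {} \<and> connected (sphere_Inter C R F0)
                \<longrightarrow> P \<inter> sphere_Inter C R F0 \<noteq> {})
           \<and> (finite (sphere_Inter C R F0) \<and> card (sphere_Inter C R F0) \<le> 2
                \<longrightarrow> sphere_Inter C R F0 \<subseteq> P)"
    using assms(1) F0(2,3) unfolding rep_points_def by presburger
  from F0(5) show ?thesis
  proof (elim disjE conjE)
    assume "sphere_Inter C R F0 = sphere_Inter C R F" "connected (sphere_Inter C R F)"
    moreover have "sphere_Inter C R F0 \<noteq> {}"
      using F0(4) by blast
    ultimately show ?thesis
      using rep by presburger
  next
    assume "finite (sphere_Inter C R F0)" "card (sphere_Inter C R F0) \<le> 2"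
    then show ?thesis
      using rep F0(4) by blast
  qed
qed

lemma exists_maximal_face:
  assumes "finite J" "(\<Inter>j\<in>J. A j) \<noteq> {}"
  obtains F where "F \<subseteq> J" "(\<Inter>j\<in>F. S j) \<inter> (\<Inter>j\<in>J. A j) \<noteq> {}"
    "\<And>i. i \<in> J - F \<Longrightarrow> (\<Inter>j\<in>insert i F. S j) \<inter> (\<Inter>j\<in>J. A j) = {}"
proof -
  define Q where "Q = {F. F \<subseteq> J \<and> (\<Inter>j\<in>F. S j) \<inter> (\<Inter>j\<in>J. A j) \<noteq> {}}"
  have "finite Q"
    unfolding Q_def using assms(1) by (simp add: finite_subset[of _ "Pow J"] subset_eq)
  moreover have "{} \<in> Q"
    unfolding Q_def using assms(2) by simp
  ultimately obtain F where "F \<in> Q" and F_max: "\<And>F'. F' \<in> Q \<Longrightarrow> F \<subseteq> F' \<Longrightarrow> F = F'"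
    using finite_has_maximal[of Q] by blast
  show ?thesis
  proof (rule that)
    show "F \<subseteq> J" "(\<Inter>j\<in>F. S j) \<inter> (\<Inter>j\<in>J. A j) \<noteq> {}"
      using \<open>F \<in> Q\<close> unfolding Q_def by auto
    show "(\<Inter>j\<in>insert i F. S j) \<inter> (\<Inter>j\<in>J. A j) = {}" if "i \<in> J - F" for i
      using F_max[of "insert i F"] that \<open>F \<subseteq> J\<close> unfolding Q_def by blast
  qed
qed

lemma maximal_face_subset:
  assumes "finite J" "F \<subseteq> J" "connected (\<Inter>j\<in>F. S j)"
    and "\<And>j. j \<in> J \<Longrightarrow> S j \<subseteq> A j" "\<And>j. j \<in> J \<Longrightarrow> closed (A j)" "\<And>j. j \<in> J \<Longrightarrow> open (A j - S j)"
    and "(\<Inter>j\<in>F. S j) \<inter> (\<Inter>j\<in>J. A j) \<noteq> {}"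
    and "\<And>i. i \<in> J - F \<Longrightarrow> (\<Inter>j\<in>insert i F. S j) \<inter> (\<Inter>j\<in>J. A j) = {}"
  shows "(\<Inter>j\<in>F. S j) \<subseteq> (\<Inter>j\<in>J. A j)"
proof -
  let ?T = "\<Inter>j\<in>F. S j" and ?K = "\<Inter>j\<in>J. A j"
  have "?T \<inter> ?K = ?T \<inter> (\<Inter>j\<in>J - F. A j - S j)"
  proof (intro equalityI subsetI)
    fix x
    assume x: "x \<in> ?T \<inter> ?K"
    have "x \<notin> S i" if "i \<in> J - F" for i
      using assms(8)[OF that] x by blast
    then show "x \<in> ?T \<inter> (\<Inter>j\<in>J - F. A j - S j)"
      using x by blast
  next
    fix x
    assume x: "x \<in> ?T \<inter> (\<Inter>j\<in>J - F. A j - S j)"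
    have "x \<in> A j" if "j \<in> J" for j
      using x assms(4)[OF that] that by (cases "j \<in> F") auto
    then show "x \<in> ?T \<inter> ?K"
      using x by blast
  qed
  moreover have "open (\<Inter>j\<in>J - F. A j - S j)"
    using assms(1,6) by (intro open_INT) auto
  ultimately have "openin (top_of_set ?T) (?T \<inter> ?K)"
    by (metis openin_open_Int)
  moreover have "closed ?K"
    using assms(5) by (intro closed_INT) auto
  then have "closedin (top_of_set ?T) (?T \<inter> ?K)"
    by (rule closedin_closed_Int)
  ultimately have "?T \<inter> ?K = ?T"
    using assms(3,7) by (meson connected_clopen)
  then show ?thesis
    by blast
qed

lemma rep_points_meets_Inter_constraints:
  fixes C :: "'i \<Rightarrow> 'a::euclidean_space"
  assumes "rep_points P J0 C R" "J \<subseteq> J0" "finite J"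
    and "\<And>j. j \<in> J \<Longrightarrow> sphere (C j) (R j) \<subseteq> A j" "\<And>j. j \<in> J \<Longrightarrow> closed (A j)"
    and "\<And>j. j \<in> J \<Longrightarrow> open (A j - sphere (C j) (R j))"
    and "bounded (\<Inter>j\<in>J. A j)" "(\<Inter>j\<in>J. A j) \<noteq> {}"
  shows "P \<inter> (\<Inter>j\<in>J. A j) \<noteq> {}"
proof -
  obtain F where F: "F \<subseteq> J" "sphere_Inter C R F \<inter> (\<Inter>j\<in>J. A j) \<noteq> {}"
    "\<And>i. i \<in> J - F \<Longrightarrow> sphere_Inter C R (insert i F) \<inter> (\<Inter>j\<in>J. A j) = {}"
    by (rule exists_maximal_face[OF assms(3,8), where S = "\<lambda>j. sphere (C j) (R j)"]) blast
  have face_subset: "sphere_Inter C R F \<subseteq> (\<Inter>j\<in>J. A j)" if "connected (sphere_Inter C R F)"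
    by (rule maximal_face_subset[OF assms(3) F(1) that assms(4-6) F(2,3)])
  have "F \<noteq> {}"
  proof
    assume "F = {}"
    then have "UNIV \<subseteq> (\<Inter>j\<in>J. A j)"
      using face_subset connected_UNIV by simp
    then show False
      using assms(7) bounded_subset not_bounded_UNIV by blast
  qed
  obtain y where y: "y \<in> sphere_Inter C R F" "y \<in> (\<Inter>j\<in>J. A j)"
    using F(2) by blast
  have "F \<subseteq> J0" "finite F"
    using F(1) assms(2,3) finite_subset by auto
  then have "y \<in> P \<or> (connected (sphere_Inter C R F) \<and> P \<inter> sphere_Inter C R F \<noteq> {})"
    using rep_points_Inter_spheres[OF assms(1) _ _ \<open>F \<noteq> {}\<close> y(1)] by blast
  then show ?thesis
  proof
    assume "y \<in> P"
    then show ?thesis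
      using y(2) by blast
  next
    assume "connected (sphere_Inter C R F) \<and> P \<inter> sphere_Inter C R F \<noteq> {}"
    then show ?thesis
      using face_subset by blast
  qed
qed

theorem lemma3:
  fixes c :: "nat \<Rightarrow> 'a::euclidean_space" and r :: "nat \<Rightarrow> real"
    and cc :: 'a and rc :: real and k :: nat and P :: "'a set" and I :: "nat set"
  assumes "rc > 0"
    and "\<And>j. j \<in> {1..k} \<Longrightarrow> r j > 0"
    and "rep_points P {0..k} (c(0 := cc)) (r(0 := rc))"
    and "I \<subseteq> {1..k}"
    and "{x \<in> cball cc rc. \<forall>j\<in>I. x \<notin> ball (c j) (r j)} \<noteq> {}"
  shows "P \<inter> {x \<in> cball cc rc. \<forall>j\<in>I. x \<notin> ball (c j) (r j)} \<noteq> {}"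
proof -
  define C R J where "C = c(0 := cc)" and "R = r(0 := rc)" and "J = insert 0 I"
  define A where "A j = (if j = 0 then cball cc rc else - ball (c j) (r j))" for j
  have "finite J" "J \<subseteq> {0..k}"
    using assms(4) finite_subset unfolding J_def by auto
  have region: "{x \<in> cball cc rc. \<forall>j\<in>I. x \<notin> ball (c j) (r j)} = (\<Inter>j\<in>J. A j)"
    using assms(4) unfolding A_def J_def by fastforce
  have A_sphere: "sphere (C j) (R j) \<subseteq> A j" for j
    unfolding A_def C_def R_def by auto
  have A_closed: "closed (A j)" for j
    unfolding A_def by auto
  have A_open: "open (A j - sphere (C j) (R j))" for j
  proof -
    have "- ball a e - sphere a e = - cball a e" for a :: 'a and e
      by auto
    then show ?thesis
      unfolding A_def C_def R_def by (auto simp: cball_diff_sphere)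
  qed
  have bounded: "bounded (\<Inter>j\<in>J. A j)"
    unfolding region[symmetric] by (rule bounded_subset[OF bounded_cball]) auto
  show ?thesis
    unfolding region
    using rep_points_meets_Inter_constraints[OF assms(3)[folded C_def R_def] \<open>J \<subseteq> {0..k}\<close>
        \<open>finite J\<close> A_sphere A_closed A_open bounded assms(5)[unfolded region]] .
qed

end
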